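(* Let $d\ge 1$ and let $X$ be a mutual-visibility set of $\mathit{BF}(d)$. Then $|X\cap A_c|\le 2$ for every column $c\in\{0,1\}^d$.
   Context: Binary strings $c=c_0\cdots c_{d-1}$ have positions $0,\dots,d-1$ from the left; $c(i)$ is $c$ with bit $i$ complemented. The butterfly $\mathit{BF}(d)$ has vertex set $\{[\ell,c]:\ell\in\{0,\dots,d\},\ c\in\{0,1\}^d\}$ ($\ell$ is the level, $c$ the column); for $\ell\in\{0,\dots,d-1\}$, $[\ell,c]$ is adjacent to $[\ell+1,c']$ iff $c'=c$ or $c'=c(\ell)$, and there are no other edges. $A_c=\{[\ell,c]:\ell\in\{0,\dots,d\}\}$ is the column $c$ and $L_j=\{[j,c]:c\in\{0,1\}^d\}$ is level $j$. For a connected graph $G$ and $X\subseteq V(G)$, two vertices $x,y$ are $X$-visible if some shortest $x,y$-path has no internal vertex in $X$; $X$ is a mutual-visibility set if every two vertices of $X$ are $X$-visible; $\mu(G)$ is the maximum size of a mutual-visibility set. *)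

theory Defs
  imports Main
begin

definition is_walk :: "'a set \<Rightarrow> ('a \<Rightarrow> 'a \<Rightarrow> bool) \<Rightarrow> 'a \<Rightarrow> 'a \<Rightarrow> 'a list \<Rightarrow> bool" where
  "is_walk V E x y p \<longleftrightarrow> p \<noteq> [] \<and> hd p = x \<and> last p = y \<and> set p \<subseteq> V \<and>
     (\<forall>i. Suc i < length p \<longrightarrow> E (p ! i) (p ! Suc i))"

(* a shortest x,y-path: a walk from x to y of minimum length (such walks are automatically paths) *)
definition is_shortest_path :: "'a set \<Rightarrow> ('a \<Rightarrow> 'a \<Rightarrow> bool) \<Rightarrow> 'a \<Rightarrow> 'a \<Rightarrow> 'a list \<Rightarrow> bool" where
  "is_shortest_path V E x y p \<longleftrightarrow> is_walk V E x y p \<and>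
     (\<forall>q. is_walk V E x y q \<longrightarrow> length p \<le> length q)"

definition internal_vertices :: "'a list \<Rightarrow> 'a set" where
  "internal_vertices p = set (butlast (tl p))"

definition visible :: "'a set \<Rightarrow> ('a \<Rightarrow> 'a \<Rightarrow> bool) \<Rightarrow> 'a set \<Rightarrow> 'a \<Rightarrow> 'a \<Rightarrow> bool" where
  "visible V E X x y \<longleftrightarrow> (\<exists>p. is_shortest_path V E x y p \<and> internal_vertices p \<inter> X = {})"

definition mutual_visibility_set :: "'a set \<Rightarrow> ('a \<Rightarrow> 'a \<Rightarrow> bool) \<Rightarrow> 'a set \<Rightarrow> bool" where
  "mutual_visibility_set V E X \<longleftrightarrow> X \<subseteq> V \<and> (\<forall>x\<in>X. \<forall>y\<in>X. visible V E X x y)"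

(* Butterfly BF(d): vertices [l,c] encoded as (l, c) with l \<le> d, c a bool list of length d
   (position i of c is c ! i). *)
definition bf_verts :: "nat \<Rightarrow> (nat \<times> bool list) set" where
  "bf_verts d = {(l, c). l \<le> d \<and> length c = d}"

definition flip_bit :: "bool list \<Rightarrow> nat \<Rightarrow> bool list" where
  "flip_bit c i = c[i := \<not> c ! i]"

definition bf_up :: "nat \<Rightarrow> nat \<times> bool list \<Rightarrow> nat \<times> bool list \<Rightarrow> bool" where
  "bf_up d u v \<longleftrightarrow> u \<in> bf_verts d \<and> v \<in> bf_verts d \<and> fst u < d \<and> fst v = fst u + 1 \<and>
     (snd v = snd u \<or> snd v = flip_bit (snd u) (fst u))"

definition bf_adj :: "nat \<Rightarrow> nat \<times> bool list \<Rightarrow> nat \<times> bool list \<Rightarrow> bool" where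
  "bf_adj d u v \<longleftrightarrow> bf_up d u v \<or> bf_up d v u"

definition bf_column :: "nat \<Rightarrow> bool list \<Rightarrow> (nat \<times> bool list) set" where
  "bf_column d c = {(l, c) | l. l \<le> d}"

end

theory Submission
  imports Defs
begin

text \<open>Along a walk in BF(d) the level changes by at most one per step, so a walk between
  [a,c] and [e,c] with a \<le> e has at least e - a + 1 vertices, and the column path attains
  this. A walk of exactly that length climbs one level per step, so bit j can only change on
  the step from level j to level j+1; reading the column forward from [a,c] fixes the bits at
  positions \<ge> the current level, reading it backward from [e,c] fixes the others. Hence the
  column path is the only shortest path, and any vertex of X strictly between two vertices of X
  in the same column blocks their visibility. Three vertices of X in one column are therefore
  impossible.\<close>

lemma is_walk_nth_ends:
  assumes "is_walk V E x y p"
  shows "p ! 0 = x" "p ! (length p - 1) = y"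
  using assms unfolding is_walk_def by (auto simp: hd_conv_nth last_conv_nth)

lemma bf_adj_level_le: "bf_adj d u v \<Longrightarrow> fst v \<le> Suc (fst u)"
  unfolding bf_adj_def bf_up_def by auto

lemma bf_adj_level_up:
  assumes "bf_adj d u v" "fst v = Suc (fst u)"
  shows "snd v = snd u \<or> snd v = flip_bit (snd u) (fst u)"
  using assms unfolding bf_adj_def bf_up_def by auto

lemma nth_flip_bit_other: "j \<noteq> i \<Longrightarrow> flip_bit c i ! j = c ! j"
  unfolding flip_bit_def by simp

lemma bf_walk_level_le:
  assumes "is_walk V (bf_adj d) x y p" "i \<le> k" "k < length p"
  shows "fst (p ! k) \<le> fst (p ! i) + (k - i)"
  using assms(2,3)
proof (induction k rule: dec_induct)
  case (step m)
  then have "bf_adj d (p ! m) (p ! Suc m)" using assms(1) unfolding is_walk_def by simp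
  then show ?case using step bf_adj_level_le by fastforce
qed simp

lemma bf_column_walk:
  assumes "a \<le> e" "e \<le> d" "length c = d"
  shows "is_walk (bf_verts d) (bf_adj d) (a, c) (e, c) (map (\<lambda>l. (l, c)) [a..<Suc e])"
  using assms unfolding is_walk_def bf_adj_def bf_up_def bf_verts_def
  by (auto simp: hd_map last_map nth_Cons' simp del: upt_Suc)

lemma bf_tight_walk_level:
  assumes w: "is_walk V (bf_adj d) (a, c) (e, c') p"
    and len: "length p = Suc e - a" and "a \<le> e" and i: "i < length p"
  shows "fst (p ! i) = a + i"
proof -
  note ends = is_walk_nth_ends[OF w]
  have "fst (p ! i) \<le> a + i" using bf_walk_level_le[OF w, of 0 i] ends i by simp
  moreover have "e \<le> fst (p ! i) + (length p - 1 - i)"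
    using bf_walk_level_le[OF w, of i "length p - 1"] ends i by simp
  ultimately show ?thesis using len i \<open>a \<le> e\<close> by linarith
qed

lemma bf_tight_walk_column:
  assumes w: "is_walk (bf_verts d) (bf_adj d) (a, c) (e, c) p"
    and level: "\<And>i. i < length p \<Longrightarrow> fst (p ! i) = a + i" and i: "i < length p"
  shows "snd (p ! i) = c"
proof -
  have ends: "snd (p ! 0) = c" "snd (p ! (length p - 1)) = c"
    using is_walk_nth_ends[OF w] by simp_all
  have bit_step: "snd (p ! Suc m) ! j = snd (p ! m) ! j" if "Suc m < length p" "j \<noteq> a + m" for m j
  proof -
    have "bf_adj d (p ! m) (p ! Suc m)" using w that(1) unfolding is_walk_def by blast
    moreover have "fst (p ! Suc m) = Suc (fst (p ! m))" using level that(1) by simp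
    ultimately have "snd (p ! Suc m) = snd (p ! m) \<or> snd (p ! Suc m) = flip_bit (snd (p ! m)) (a + m)"
      using bf_adj_level_up level[of m] that(1) by fastforce
    then show ?thesis using that(2) by (auto simp: nth_flip_bit_other)
  qed
  have stable: "snd (p ! k) ! j = snd (p ! i) ! j"
    if "i \<le> k" "k < length p" "j \<notin> {a + i..<a + k}" for i k j
    using that
  proof (induction k rule: dec_induct)
    case (step m)
    then have "snd (p ! Suc m) ! j = snd (p ! m) ! j" by (intro bit_step) auto
    also have "\<dots> = snd (p ! i) ! j" using step by (intro step.IH) auto
    finally show ?case .
  qed simp
  show ?thesis
  proof (rule nth_equalityI)
    have "p ! 0 \<in> bf_verts d" "p ! i \<in> bf_verts d" using w i unfolding is_walk_def by auto
    then show "length (snd (p ! i)) = length c" using ends(1) unfolding bf_verts_def by auto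
    fix j
    show "snd (p ! i) ! j = c ! j"
    proof (cases "a + i \<le> j")
      case True
      then show ?thesis using stable[of 0 i j] ends i by simp
    next
      case False
      then show ?thesis using stable[of i "length p - 1" j] ends i by simp
    qed
  qed
qed

lemma bf_shortest_path_in_column:
  assumes sp: "is_shortest_path (bf_verts d) (bf_adj d) (a, c) (e, c) p"
    and "a \<le> e" "e \<le> d" "length c = d"
  shows "p = map (\<lambda>l. (l, c)) [a..<Suc e]"
proof -
  have w: "is_walk (bf_verts d) (bf_adj d) (a, c) (e, c) p"
    using sp unfolding is_shortest_path_def by blast
  have "length p \<le> length (map (\<lambda>l. (l, c)) [a..<Suc e])"
    using sp bf_column_walk[OF assms(2-4)] unfolding is_shortest_path_def by blast
  then have "length p \<le> Suc e - a" by (simp del: upt_Suc)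
  moreover have "e \<le> a + (length p - 1)"
    using bf_walk_level_le[OF w, of 0 "length p - 1"] is_walk_nth_ends[OF w] w
    unfolding is_walk_def by simp
  moreover have "0 < length p" using w unfolding is_walk_def by simp
  ultimately have len: "length p = Suc e - a" by linarith
  note level = bf_tight_walk_level[OF w len \<open>a \<le> e\<close>]
  show ?thesis
  proof (rule nth_equalityI)
    show "length p = length (map (\<lambda>l. (l, c)) [a..<Suc e])" using len by (simp del: upt_Suc)
    fix i
    assume "i < length p"
    then show "p ! i = map (\<lambda>l. (l, c)) [a..<Suc e] ! i"
      using level bf_tight_walk_column[OF w level] len by (simp add: prod_eq_iff del: upt_Suc)
  qed
qed

lemma bf_column_not_visible:
  assumes "a < b" "b < e" "e \<le> d" "length c = d" "(b, c) \<in> X"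
  shows "\<not> visible (bf_verts d) (bf_adj d) X (a, c) (e, c)"
proof
  assume "visible (bf_verts d) (bf_adj d) X (a, c) (e, c)"
  then obtain p where sp: "is_shortest_path (bf_verts d) (bf_adj d) (a, c) (e, c) p"
    and clear: "internal_vertices p \<inter> X = {}" unfolding visible_def by blast
  have "p = map (\<lambda>l. (l, c)) [a..<Suc e]"
    using bf_shortest_path_in_column[OF sp] assms by simp
  then have "internal_vertices p = (\<lambda>l. (l, c)) ` set (butlast (tl [a..<Suc e]))"
    by (simp add: internal_vertices_def map_tl[symmetric] map_butlast[symmetric] del: upt_Suc)
  also have "butlast (tl [a..<Suc e]) = [Suc a..<e]"
    by (simp del: upt_Suc) simp
  finally have "internal_vertices p = (\<lambda>l. (l, c)) ` {Suc a..<e}" by simp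
  then have "(b, c) \<in> internal_vertices p" using assms(1,2) by simp
  then show False using clear assms(5) by blast
qed

lemma three_ordered_elements:
  fixes S :: "'a::linorder set"
  assumes "3 \<le> card S"
  obtains a b e where "a \<in> S" "b \<in> S" "e \<in> S" "a < b" "b < e"
proof -
  have fin: "finite S" and ne: "S \<noteq> {}" using assms card.infinite by force+
  have "card {Min S, Max S} \<le> 2" by (simp add: card_insert_if)
  moreover have "card S \<le> card {Min S, Max S}" if "S \<subseteq> {Min S, Max S}"
    using that by (intro card_mono) simp_all
  ultimately have "\<not> S \<subseteq> {Min S, Max S}" using assms by linarith
  then obtain b where b: "b \<in> S" "b \<noteq> Min S" "b \<noteq> Max S" by blast
  then have "Min S < b" "b < Max S" using fin by (auto simp: order.strict_iff_order)
  then show ?thesis using that[of "Min S" b "Max S"] b(1) fin ne by simp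
qed

theorem lemma5p1:
  fixes d :: nat and X :: "(nat \<times> bool list) set" and c :: "bool list"
  assumes "d \<ge> 1"
    and "mutual_visibility_set (bf_verts d) (bf_adj d) X"
    and "length c = d"
  shows "card (X \<inter> bf_column d c) \<le> 2"
proof (rule ccontr)
  define S where "S = {l. l \<le> d \<and> (l, c) \<in> X}"
  have "X \<inter> bf_column d c = (\<lambda>l. (l, c)) ` S"
    unfolding S_def bf_column_def by auto
  then have "card (X \<inter> bf_column d c) = card S" by (simp add: card_image inj_on_def)
  moreover assume "\<not> card (X \<inter> bf_column d c) \<le> 2"
  ultimately have "3 \<le> card S" by linarith
  then obtain a b e where "a \<in> S" "b \<in> S" "e \<in> S" "a < b" "b < e"
    by (rule three_ordered_elements)
  then have "\<not> visible (bf_verts d) (bf_adj d) X (a, c) (e, c)"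
    using bf_column_not_visible[of a b e d c X] assms(3) unfolding S_def by simp
  moreover have "visible (bf_verts d) (bf_adj d) X (a, c) (e, c)"
    using assms(2) \<open>a \<in> S\<close> \<open>e \<in> S\<close> unfolding S_def mutual_visibility_set_def by simp
  ultimately show False by blast
qed

end
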